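(* For all integers $k\ge2$, $q\ge2$ with $k+q>4$, the hypergraph colouring distribution (the point mass on $\psi_{k,q}$) satisfies SYM, BAL, MIN, POS and UNI.
   Context: $\Omega=\{1,\dots,q\}$, $\Psi_{k,q}=\{\psi_{k,q}\}$ with $\psi_{k,q}(\sigma)=1-\mathbf 1\{\sigma_1=\dots=\sigma_k\}$, and $P$ the point mass on $\psi_{k,q}$. $\boldsymbol\psi$ denotes a sample from $P$, $\xi=q^{-k}\sum_{\sigma\in\Omega^k}\mathbb E[\boldsymbol\psi(\sigma)]$, $\psi^\theta(\sigma)=\psi(\sigma_{\theta(1)},\dots,\sigma_{\theta(k)})$. SYM: for all $i\in[k]$, $\omega\in\Omega$, $\psi\in\Psi$, $\sum_{\tau\in\Omega^k}\mathbf 1\{\tau_i=\omega\}\psi(\tau)=q^{k-1}\xi$, and $P(\psi)=P(\psi^\theta)$ for every permutation $\theta$. BAL: $\phi(\mu)=\sum_{\tau\in\Omega^k}\mathbb E[\boldsymbol\psi(\tau)]\prod_{i=1}^k\mu(\tau_i)$ is concave on the distributions $\mu$ on $\Omega$ and maximised at the uniform distribution. MIN: among distributions $\rho$ on $\Omega\times\Omega$ with both marginals uniform, $\varphi(\rho)=\sum_{\sigma,\tau\in\Omega^k}\mathbb E[\boldsymbol\psi(\sigma)\boldsymbol\psi(\tau)]\prod_{i=1}^k\rho(\sigma_i,\tau_i)$ has the uniform distribution as unique global minimiser. POS: for all probability measures $\pi,\pi'$ on the distributions on $\Omega$ with mean the uniform distribution, and all $\ell\ge2$, with $\rho_i$ i.i.d.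 from $\pi$, $\rho'_i$ i.i.d. from $\pi'$, $\boldsymbol\psi$ from $P$, independent, $\mathbb E[(1-\sum_\tau\boldsymbol\psi(\tau)\prod_{i=1}^k\rho_i(\tau_i))^\ell+(k-1)(1-\sum_\tau\boldsymbol\psi(\tau)\prod_{i=1}^k\rho'_i(\tau_i))^\ell-k(1-\sum_\tau\boldsymbol\psi(\tau)\rho_1(\tau_1)\prod_{i=2}^k\rho'_i(\tau_i))^\ell]\ge0$. UNI: every CSP with constraint functions from $\Psi$ (constraint $a$ on a $k$-tuple $\partial a$ of variables) in which each constraint has pairwise distinct variables and whose bipartite variable–constraint graph is unicyclic admits $\sigma$ with $\prod_a\psi_a(\sigma(\partial a))>0$. *)

theory Defs
  imports "HOL-Probability.Probability"
begin

text \<open>Conventions: \<Omega> = {1..q}; a k-tuple \<sigma> \<in> \<Omega>^k is an extensional function on {1..k}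
  with values in {1..q}.\<close>

type_synonym cfun = "(nat \<Rightarrow> nat) \<Rightarrow> real"

definition Om :: "nat \<Rightarrow> nat set" where
  "Om q = {1..q}"

definition tuples :: "nat \<Rightarrow> nat \<Rightarrow> (nat \<Rightarrow> nat) set" where
  "tuples k q = PiE {1..k} (\<lambda>_. Om q)"

definition psi_kq :: "nat \<Rightarrow> nat \<Rightarrow> cfun" where
  "psi_kq k q \<sigma> = 1 - (if (\<forall>i\<in>{1..k}. \<sigma> i = \<sigma> 1) then 1 else 0)"

definition Ekq :: "cfun pmf \<Rightarrow> (nat \<Rightarrow> nat) \<Rightarrow> real" where
  "Ekq P \<sigma> = measure_pmf.expectation P (\<lambda>\<psi>. \<psi> \<sigma>)"

definition xi :: "nat \<Rightarrow> nat \<Rightarrow> cfun pmf \<Rightarrow> real" where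
  "xi k q P = (real q) powi (- int k) * (\<Sum>\<sigma>\<in>tuples k q. Ekq P \<sigma>)"

definition permute_cfun :: "(nat \<Rightarrow> nat) \<Rightarrow> cfun \<Rightarrow> cfun" where
  "permute_cfun \<theta> \<psi> = (\<lambda>\<sigma>. \<psi> (\<sigma> \<circ> \<theta>))"

definition prop_SYM :: "nat \<Rightarrow> nat \<Rightarrow> cfun set \<Rightarrow> cfun pmf \<Rightarrow> bool" where
  "prop_SYM k q Psi P \<longleftrightarrow>
     (\<forall>i\<in>{1..k}. \<forall>\<omega>\<in>Om q. \<forall>\<psi>\<in>Psi.
        (\<Sum>\<tau>\<in>tuples k q. (if \<tau> i = \<omega> then 1 else 0) * \<psi> \<tau>) = real q ^ (k - 1) * xi k q P)
   \<and> (\<forall>\<psi>\<in>Psi. \<forall>\<theta>. \<theta> permutes {1..k} \<longrightarrow> pmf P \<psi> = pmf P (permute_cfun \<theta> \<psi>))"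

definition distrs :: "nat \<Rightarrow> (nat \<Rightarrow> real) set" where
  "distrs q = {\<mu>. (\<forall>i. 0 \<le> \<mu> i) \<and> (\<forall>i. i \<notin> Om q \<longrightarrow> \<mu> i = 0) \<and> (\<Sum>i\<in>Om q. \<mu> i) = 1}"

definition unif :: "nat \<Rightarrow> nat \<Rightarrow> real" where
  "unif q = (\<lambda>i. if i \<in> Om q then 1 / real q else 0)"

definition phi_bal :: "nat \<Rightarrow> nat \<Rightarrow> cfun pmf \<Rightarrow> (nat \<Rightarrow> real) \<Rightarrow> real" where
  "phi_bal k q P \<mu> = (\<Sum>\<tau>\<in>tuples k q. Ekq P \<tau> * (\<Prod>i\<in>{1..k}. \<mu> (\<tau> i)))"

definition prop_BAL :: "nat \<Rightarrow> nat \<Rightarrow> cfun pmf \<Rightarrow> bool" where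
  "prop_BAL k q P \<longleftrightarrow>
     (\<forall>\<mu>\<in>distrs q. \<forall>\<nu>\<in>distrs q. \<forall>t::real. 0 \<le> t \<and> t \<le> 1 \<longrightarrow>
        t * phi_bal k q P \<mu> + (1 - t) * phi_bal k q P \<nu>
          \<le> phi_bal k q P (\<lambda>i. t * \<mu> i + (1 - t) * \<nu> i))
   \<and> (\<forall>\<mu>\<in>distrs q. phi_bal k q P \<mu> \<le> phi_bal k q P (unif q))"

definition couplings :: "nat \<Rightarrow> (nat \<times> nat \<Rightarrow> real) set" where
  "couplings q = {\<rho>. (\<forall>x. 0 \<le> \<rho> x) \<and> (\<forall>x. x \<notin> Om q \<times> Om q \<longrightarrow> \<rho> x = 0)
      \<and> (\<Sum>x\<in>Om q \<times> Om q. \<rho> x) = 1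
      \<and> (\<forall>i\<in>Om q. (\<Sum>j\<in>Om q. \<rho> (i, j)) = 1 / real q)
      \<and> (\<forall>j\<in>Om q. (\<Sum>i\<in>Om q. \<rho> (i, j)) = 1 / real q)}"

definition unif2 :: "nat \<Rightarrow> nat \<times> nat \<Rightarrow> real" where
  "unif2 q = (\<lambda>x. if x \<in> Om q \<times> Om q then 1 / (real q)^2 else 0)"

definition phi_min :: "nat \<Rightarrow> nat \<Rightarrow> cfun pmf \<Rightarrow> (nat \<times> nat \<Rightarrow> real) \<Rightarrow> real" where
  "phi_min k q P \<rho> = (\<Sum>\<sigma>\<in>tuples k q. \<Sum>\<tau>\<in>tuples k q.
      measure_pmf.expectation P (\<lambda>\<psi>. \<psi> \<sigma> * \<psi> \<tau>) * (\<Prod>i\<in>{1..k}. \<rho> (\<sigma> i, \<tau> i)))"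

definition prop_MIN :: "nat \<Rightarrow> nat \<Rightarrow> cfun pmf \<Rightarrow> bool" where
  "prop_MIN k q P \<longleftrightarrow> unif2 q \<in> couplings q
     \<and> (\<forall>\<rho>\<in>couplings q. phi_min k q P (unif2 q) \<le> phi_min k q P \<rho>)
     \<and> (\<forall>\<rho>\<in>couplings q. phi_min k q P \<rho> = phi_min k q P (unif2 q) \<longrightarrow> \<rho> = unif2 q)"

text \<open>Probability measures on the distributions on \<Omega> (Borel sets for the product
  topology on nat \<Rightarrow> real, restricted to the simplex) with mean the uniform distribution.\<close>
definition centred_measures :: "nat \<Rightarrow> (nat \<Rightarrow> real) measure set" where
  "centred_measures q = {\<pi>. prob_space \<pi> \<and> sets \<pi> = sets (restrict_space borel (distrs q))
      \<and> (\<forall>\<omega>\<in>Om q. (\<integral>\<rho>. \<rho> \<omega> \<partial>\<pi>) = 1 / real q)}"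

definition prop_POS :: "nat \<Rightarrow> nat \<Rightarrow> cfun pmf \<Rightarrow> bool" where
  "prop_POS k q P \<longleftrightarrow>
    (\<forall>\<pi>\<in>centred_measures q. \<forall>\<pi>'\<in>centred_measures q. \<forall>l::nat. l \<ge> 2 \<longrightarrow>
      (let M = (PiM {1..k} (\<lambda>_. \<pi>) \<Otimes>\<^sub>M PiM {1..k} (\<lambda>_. \<pi>')) \<Otimes>\<^sub>M measure_pmf P;
           f = (\<lambda>((r, r'), \<psi>).
              (1 - (\<Sum>\<tau>\<in>tuples k q. \<psi> \<tau> * (\<Prod>i\<in>{1..k}. r i (\<tau> i)))) ^ l
              + real (k - 1) * (1 - (\<Sum>\<tau>\<in>tuples k q. \<psi> \<tau> * (\<Prod>i\<in>{1..k}. r' i (\<tau> i)))) ^ l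
              - real k * (1 - (\<Sum>\<tau>\<in>tuples k q. \<psi> \<tau> * (r 1 (\<tau> 1) * (\<Prod>i\<in>{2..k}. r' i (\<tau> i))))) ^ l)
       in integrable M f \<and> 0 \<le> (\<integral>x. f x \<partial>M)))"

text \<open>CSPs: variables V, constraints F (both labelled by naturals), constraint a acts on
  the k-tuple (dd a 1, ..., dd a k) with constraint function c a.\<close>

definition fg_vertices :: "nat set \<Rightarrow> nat set \<Rightarrow> (nat + nat) set" where
  "fg_vertices V F = Inl ` V \<union> Inr ` F"

definition fg_edges :: "nat \<Rightarrow> nat set \<Rightarrow> (nat \<Rightarrow> nat \<Rightarrow> nat) \<Rightarrow> (nat + nat) set set" where
  "fg_edges k F dd = {{Inl x, Inr a} | x a. a \<in> F \<and> x \<in> dd a ` {1..k}}"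

definition graph_connected :: "'v set \<Rightarrow> 'v set set \<Rightarrow> bool" where
  "graph_connected W E \<longleftrightarrow> (\<forall>u\<in>W. \<forall>w\<in>W. (u, w) \<in> {(x, y). {x, y} \<in> E}\<^sup>*)"

text \<open>A cycle (as a subgraph, i.e. its edge set): given by a list of n \<ge> 3 distinct
  vertices, consecutive ones (cyclically) adjacent.\<close>
definition is_cycle :: "'v set set \<Rightarrow> 'v set set \<Rightarrow> bool" where
  "is_cycle E C \<longleftrightarrow> (\<exists>vs. distinct vs \<and> length vs \<ge> 3
      \<and> (\<forall>i<length vs. {vs ! i, vs ! ((i + 1) mod length vs)} \<in> E)
      \<and> C = {{vs ! i, vs ! ((i + 1) mod length vs)} | i. i < length vs})"

definition unicyclic :: "'v set \<Rightarrow> 'v set set \<Rightarrow> bool" where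
  "unicyclic W E \<longleftrightarrow> graph_connected W E \<and> (\<exists>!C. is_cycle E C)"

definition prop_UNI :: "nat \<Rightarrow> nat \<Rightarrow> cfun set \<Rightarrow> bool" where
  "prop_UNI k q Psi \<longleftrightarrow>
    (\<forall>(V::nat set) (F::nat set) (dd::nat \<Rightarrow> nat \<Rightarrow> nat) (c::nat \<Rightarrow> cfun).
       finite V \<and> finite F
       \<and> (\<forall>a\<in>F. c a \<in> Psi)
       \<and> (\<forall>a\<in>F. \<forall>i\<in>{1..k}. dd a i \<in> V)
       \<and> (\<forall>a\<in>F. inj_on (dd a) {1..k})
       \<and> unicyclic (fg_vertices V F) (fg_edges k F dd)
       \<longrightarrow> (\<exists>\<sigma>. \<sigma> \<in> V \<rightarrow> Om q \<and>
              (\<Prod>a\<in>F. c a (\<lambda>i\<in>{1..k}. \<sigma> (dd a i))) > 0))"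

end

theory Submission
  imports Defs
begin

text \<open>Everything rests on one identity: \<open>\<psi>\<close> vanishes exactly on the \<open>q\<close> constant tuples, so
  \<open>\<Sum>\<^sub>\<tau> \<psi>(\<tau>) \<Prod>\<^sub>j w\<^sub>j(\<tau>\<^sub>j) = \<Prod>\<^sub>j \<Sum>\<^sub>x w\<^sub>j(x) - \<Sum>\<^sub>x \<Prod>\<^sub>j w\<^sub>j(x)\<close> for arbitrary weights \<open>w\<close>.
  With it SYM is a count, \<open>\<phi>(\<mu>) = 1 - \<Sum>\<^sub>x \<mu>(x)^k\<close> in BAL and
  \<open>\<phi>(\<rho>) = 1 - 2q^(1-k) + \<Sum>\<^sub>x\<^sub>y \<rho>(x,y)^k\<close> in MIN, so both reduce to (strict) convexity of
  \<open>t \<mapsto> t^k\<close>. For POS, \<open>1 - \<Sum>\<^sub>\<tau> \<psi>(\<tau>) \<Prod>\<^sub>i \<rho>\<^sub>i(\<tau>\<^sub>i) = \<Sum>\<^sub>x \<Prod>\<^sub>i \<rho>\<^sub>i(x)\<close>; expanding its \<open>l\<close>-th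
  power over words \<open>w \<in> \<Omega>^l\<close> and integrating out the independent \<open>\<rho>\<^sub>i\<close> turns the expectation into
  \<open>\<Sum>\<^sub>w X\<^sub>w^k + (k-1) Y\<^sub>w^k - k X\<^sub>w Y\<^sub>w^(k-1)\<close> with \<open>X\<^sub>w, Y\<^sub>w \<ge> 0\<close>, which is nonnegative by Young's
  inequality. For UNI, a graph with at most one cycle has no more edges than vertices, so the
  factor graph gives \<open>k |F| \<le> |V| + |F|\<close>; double counting then yields a variable lying in fewer
  than \<open>q\<close> constraints when \<open>k + q > 4\<close>, and colouring it last, greedily, keeps every constraint
  non-monochromatic.\<close>

definition monochromatic :: "nat \<Rightarrow> (nat \<Rightarrow> nat) \<Rightarrow> bool" where
  "monochromatic k \<tau> \<longleftrightarrow> (\<forall>i\<in>{1..k}. \<tau> i = \<tau> 1)"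

lemma psi_kq_eq: "psi_kq k q \<tau> = (if monochromatic k \<tau> then 0 else 1)"
  unfolding psi_kq_def monochromatic_def[symmetric] by simp

lemma monochromatic_iff: "monochromatic k \<tau> \<longleftrightarrow> (\<forall>i\<in>{1..k}. \<forall>j\<in>{1..k}. \<tau> i = \<tau> j)"
  unfolding monochromatic_def
proof (intro iffI ballI)
  fix i j assume "\<forall>i\<in>{1..k}. \<tau> i = \<tau> 1" "i \<in> {1..k}" "j \<in> {1..k}"
  then have "\<tau> i = \<tau> 1" "\<tau> j = \<tau> 1" by blast+
  then show "\<tau> i = \<tau> j" by (rule trans[OF _ sym])
next
  fix i assume "\<forall>i\<in>{1..k}. \<forall>j\<in>{1..k}. \<tau> i = \<tau> j" "i \<in> {1..k}"
  moreover from \<open>i \<in> {1..k}\<close> have "1 \<in> {1..k}" by simp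
  ultimately show "\<tau> i = \<tau> 1" by blast
qed

lemma monochromatic_cong:
  "(\<And>i. i \<in> {1..k} \<Longrightarrow> \<tau> i = \<tau>' i) \<Longrightarrow> monochromatic k \<tau> \<longleftrightarrow> monochromatic k \<tau>'"
  unfolding monochromatic_iff by auto

lemma finite_Om [simp]: "finite (Om q)"
  by (simp add: Om_def)

lemma card_Om [simp]: "card (Om q) = q"
  by (simp add: Om_def)

lemma finite_tuples [simp]: "finite (tuples k q)"
  unfolding tuples_def by (intro finite_PiE) simp_all

lemma monochromatic_tuples:
  assumes "k \<ge> 1"
  shows "{\<tau>\<in>tuples k q. monochromatic k \<tau>} = (\<lambda>x. \<lambda>j\<in>{1..k}. x) ` Om q"
proof (intro equalityI subsetI)
  fix \<tau> assume "\<tau> \<in> {\<tau>\<in>tuples k q. monochromatic k \<tau>}"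
  then have \<tau>: "\<tau> \<in> PiE {1..k} (\<lambda>_. Om q)" and mono: "\<forall>i\<in>{1..k}. \<tau> i = \<tau> 1"
    unfolding tuples_def monochromatic_def by blast+
  have "\<tau> j = (\<lambda>j\<in>{1..k}. \<tau> 1) j" for j
  proof (cases "j \<in> {1..k}")
    case True
    with mono have "\<tau> j = \<tau> 1" by blast
    with True show ?thesis by simp
  qed (use \<tau> in \<open>auto simp: PiE_def extensional_def\<close>)
  then have "\<tau> = (\<lambda>j\<in>{1..k}. \<tau> 1)" by (rule ext)
  moreover have "\<tau> 1 \<in> Om q"
    using \<tau> assms by (auto simp: PiE_def)
  ultimately show "\<tau> \<in> (\<lambda>x. \<lambda>j\<in>{1..k}. x) ` Om q" by blast
qed (use assms in \<open>auto simp: tuples_def monochromatic_def\<close>)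

lemma sum_psi_kq_prod:
  assumes "k \<ge> 1"
  shows "(\<Sum>\<tau>\<in>tuples k q. psi_kq k q \<tau> * (\<Prod>j\<in>{1..k}. w j (\<tau> j)))
       = (\<Prod>j\<in>{1..k}. \<Sum>x\<in>Om q. w j x) - (\<Sum>x\<in>Om q. \<Prod>j\<in>{1..k}. (w j x :: real))"
proof -
  let ?P = "\<lambda>\<tau>. \<Prod>j\<in>{1..k}. w j (\<tau> j)"
  have split: "(\<Sum>\<tau>\<in>tuples k q. psi_kq k q \<tau> * ?P \<tau>)
      = (\<Sum>\<tau>\<in>tuples k q. ?P \<tau>) - (\<Sum>\<tau>\<in>tuples k q. if monochromatic k \<tau> then ?P \<tau> else 0)"
    unfolding sum_subtractf[symmetric] by (rule sum.cong) (simp_all add: psi_kq_eq)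
  have all: "(\<Sum>\<tau>\<in>tuples k q. ?P \<tau>) = (\<Prod>j\<in>{1..k}. \<Sum>x\<in>Om q. w j x)"
    unfolding tuples_def by (rule prod_sum_PiE[symmetric]) simp_all
  have inj: "inj_on (\<lambda>x. \<lambda>j\<in>{1..k}. x) (Om q)"
  proof (rule inj_onI)
    fix x y assume "(\<lambda>j\<in>{1..k}. x) = (\<lambda>j\<in>{1..k}. y)"
    then have "(\<lambda>j\<in>{1..k}. x) 1 = (\<lambda>j\<in>{1..k}. y) 1" by simp
    then show "x = y" using assms by simp
  qed
  have "(\<Sum>\<tau>\<in>tuples k q. if monochromatic k \<tau> then ?P \<tau> else 0)
      = (\<Sum>\<tau>\<in>{\<tau>\<in>tuples k q. monochromatic k \<tau>}. ?P \<tau>)"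
    by (rule sum.inter_filter[symmetric]) simp
  also have "\<dots> = (\<Sum>x\<in>Om q. ?P (\<lambda>j\<in>{1..k}. x))"
    unfolding monochromatic_tuples[OF assms] using inj by (simp add: sum.reindex)
  also have "\<dots> = (\<Sum>x\<in>Om q. \<Prod>j\<in>{1..k}. w j x)"
    by (intro sum.cong prod.cong) auto
  finally show ?thesis
    using split all by linarith
qed

lemma Ekq_return_pmf [simp]: "Ekq (return_pmf \<psi>) \<sigma> = \<psi> \<sigma>"
  by (simp add: Ekq_def)

lemma xi_psi_kq:
  assumes "k \<ge> 1" "q \<ge> 1"
  shows "xi k q (return_pmf (psi_kq k q)) = 1 - real q / real q ^ k"
proof -
  have "(\<Sum>\<tau>\<in>tuples k q. psi_kq k q \<tau>) = real q ^ k - real q"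
    using sum_psi_kq_prod[OF assms(1), of q "\<lambda>_ _. 1"] by simp
  then show ?thesis
    using assms by (simp add: xi_def power_int_minus field_simps)
qed

lemma psi_kq_permute:
  assumes "\<theta> permutes {1..k}"
  shows "permute_cfun \<theta> (psi_kq k q) = psi_kq k q"
proof
  fix \<sigma> :: "nat \<Rightarrow> nat"
  have "(\<forall>i\<in>{1..k}. \<forall>j\<in>{1..k}. \<sigma> (\<theta> i) = \<sigma> (\<theta> j))
      \<longleftrightarrow> (\<forall>i\<in>\<theta> ` {1..k}. \<forall>j\<in>\<theta> ` {1..k}. \<sigma> i = \<sigma> j)"
    by blast
  then have "monochromatic k (\<sigma> \<circ> \<theta>) \<longleftrightarrow> monochromatic k \<sigma>"
    unfolding monochromatic_iff permutes_image[OF assms] comp_def .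
  then show "permute_cfun \<theta> (psi_kq k q) \<sigma> = psi_kq k q \<sigma>"
    by (simp add: permute_cfun_def psi_kq_eq)
qed

lemma sum_psi_kq_fixed_coordinate:
  assumes "i \<in> {1..k}" "\<omega> \<in> Om q"
  shows "(\<Sum>\<tau>\<in>tuples k q. (if \<tau> i = \<omega> then 1 else 0) * psi_kq k q \<tau>) = real q ^ (k - 1) - 1"
proof -
  have k: "k \<ge> 1"
    using assms(1) by simp
  define w where "w = (\<lambda>j x. if j = i then (if x = \<omega> then 1 else 0) else (1::real))"
  have w_prod: "(\<Prod>j\<in>{1..k}. w j (\<tau> j)) = (if \<tau> i = \<omega> then 1 else 0)" for \<tau>
    using assms(1) by (simp add: w_def prod.delta)
  have "(\<Prod>j\<in>{1..k}. \<Sum>x\<in>Om q. w j x) = (\<Prod>j\<in>{1..k}. if j = i then 1 else real q)"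
    using assms(2) by (intro prod.cong) (auto simp: w_def)
  also have "\<dots> = (\<Prod>j\<in>{1..k} - {i}. real q)"
    using assms(1) by (subst prod.remove[of _ i]) auto
  also have "\<dots> = real q ^ (k - 1)"
    using assms(1) by simp
  finally have rows: "(\<Prod>j\<in>{1..k}. \<Sum>x\<in>Om q. w j x) = real q ^ (k - 1)" .
  have diagonal: "(\<Sum>x\<in>Om q. \<Prod>j\<in>{1..k}. w j x) = 1"
    using assms w_prod[of "\<lambda>_. _"] by simp
  have "(\<Sum>\<tau>\<in>tuples k q. (if \<tau> i = \<omega> then 1 else 0) * psi_kq k q \<tau>)
      = (\<Sum>\<tau>\<in>tuples k q. psi_kq k q \<tau> * (\<Prod>j\<in>{1..k}. w j (\<tau> j)))"
    by (simp only: w_prod mult.commute)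
  also have "\<dots> = real q ^ (k - 1) - 1"
    unfolding sum_psi_kq_prod[OF k] rows diagonal by simp
  finally show ?thesis .
qed

lemma prop_SYM_psi_kq:
  assumes "k \<ge> 1" "q \<ge> 1"
  shows "prop_SYM k q {psi_kq k q} (return_pmf (psi_kq k q))"
proof -
  have "real q ^ (k - 1) - 1 = real q ^ (k - 1) * xi k q (return_pmf (psi_kq k q))"
  proof -
    have "real q ^ k = real q * real q ^ (k - 1)"
      using assms(1) by (simp flip: power_Suc)
    then show ?thesis
      unfolding xi_psi_kq[OF assms] using assms by (simp add: field_simps)
  qed
  then show ?thesis
    unfolding prop_SYM_def using sum_psi_kq_fixed_coordinate psi_kq_permute by simp
qed

lemma convex_on_power_nonneg: "convex_on {0::real..} (\<lambda>x. x ^ n)"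
  by (cases "even n")
    (auto intro: convex_power_odd convex_on_subset[OF convex_power_even] simp: convex_real_interval)

lemma Bernoulli_inequality_strict:
  fixes h :: real
  assumes "h \<ge> -1" "h \<noteq> 0" "n \<ge> 2"
  shows "1 + real n * h < (1 + h) ^ n"
proof -
  have "0 < h * h"
    using assms(2) not_real_square_gt_zero by blast
  from assms(3) show ?thesis
  proof (induction n rule: nat_induct_at_least)
    case base
    then show ?case using \<open>0 < h * h\<close> by (simp add: power2_eq_square algebra_simps)
  next
    case (Suc n)
    have "0 < real n * (h * h)"
      using Suc.hyps \<open>0 < h * h\<close> by simp
    then have "1 + real (Suc n) * h < (1 + real n * h) * (1 + h)"
      by (simp add: algebra_simps)
    also have "\<dots> \<le> (1 + h) ^ n * (1 + h)"
      using Suc.IH assms(1) by (intro mult_right_mono) auto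
    finally show ?case by (simp add: mult.commute)
  qed
qed

lemma power_minus_tangent_eq:
  fixes a x :: real
  assumes "a > 0"
  shows "x ^ k - (a ^ k + real k * a ^ (k - 1) * (x - a))
       = a ^ k * ((1 + (x / a - 1)) ^ k - (1 + real k * (x / a - 1)))"
proof -
  have "a ^ k * (1 + (x / a - 1)) ^ k = x ^ k"
    using assms by (simp flip: power_mult_distrib)
  moreover have "a ^ k * (real k * (x / a - 1)) = real k * a ^ (k - 1) * (x - a)"
  proof (cases k)
    case (Suc n)
    then show ?thesis using assms by (simp add: field_simps)
  qed simp
  ultimately show ?thesis by (simp add: algebra_simps)
qed

lemma power_ge_tangent:
  fixes a x :: real
  assumes "x \<ge> 0" "a \<ge> 0"
  shows "a ^ k + real k * a ^ (k - 1) * (x - a) \<le> x ^ k"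
proof (cases "a = 0")
  case True
  then show ?thesis
    using assms(1) by (cases k) (auto simp: power_0_left)
next
  case False
  then have a: "a > 0" using assms(2) by simp
  have "1 + real k * (x / a - 1) \<le> (1 + (x / a - 1)) ^ k"
    using a assms(1) by (intro Bernoulli_inequality) simp
  then have "0 \<le> x ^ k - (a ^ k + real k * a ^ (k - 1) * (x - a))"
    unfolding power_minus_tangent_eq[OF a] using a by simp
  then show ?thesis by simp
qed

lemma power_gt_tangent:
  fixes a x :: real
  assumes "x \<ge> 0" "a > 0" "k \<ge> 2" "x \<noteq> a"
  shows "a ^ k + real k * a ^ (k - 1) * (x - a) < x ^ k"
proof -
  have "1 + real k * (x / a - 1) < (1 + (x / a - 1)) ^ k"
    using assms by (intro Bernoulli_inequality_strict) (auto simp: field_simps)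
  then have "0 < x ^ k - (a ^ k + real k * a ^ (k - 1) * (x - a))"
    unfolding power_minus_tangent_eq[OF assms(2)] using assms(2) by simp
  then show ?thesis by simp
qed

lemma Young_inequality_power:
  fixes x y :: real
  assumes "x \<ge> 0" "y \<ge> 0" "k \<ge> 1"
  shows "real k * (x * y ^ (k - 1)) \<le> x ^ k + real (k - 1) * y ^ k"
proof -
  have "y ^ k = y * y ^ (k - 1)"
    using assms(3) by (simp flip: power_Suc)
  then show ?thesis
    using power_ge_tangent[OF assms(1,2), of k] assms(3) by (simp add: of_nat_diff algebra_simps)
qed

lemma sum_tangent_uniform:
  fixes f :: "'a \<Rightarrow> real"
  assumes "finite S" "(\<Sum>x\<in>S. f x) = 1"
  shows "(\<Sum>x\<in>S. (1 / real (card S)) ^ k + real k * (1 / real (card S)) ^ (k - 1) * (f x - 1 / real (card S)))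
       = real (card S) * (1 / real (card S)) ^ k"
proof -
  have "S \<noteq> {}"
    using assms(2) by auto
  then have "real (card S) * (1 / real (card S)) = 1"
    using assms(1) by simp
  then show ?thesis
    using assms(2) by (simp add: sum.distrib sum_subtractf flip: sum_distrib_left)
qed

lemma sum_power_ge_uniform:
  fixes f :: "'a \<Rightarrow> real"
  assumes "finite S" "\<forall>x\<in>S. f x \<ge> 0" "(\<Sum>x\<in>S. f x) = 1"
  shows "real (card S) * (1 / real (card S)) ^ k \<le> (\<Sum>x\<in>S. f x ^ k)"
  unfolding sum_tangent_uniform[OF assms(1,3), of k, symmetric]
  using assms(2) by (intro sum_mono power_ge_tangent) auto

lemma sum_power_gt_uniform:
  fixes f :: "'a \<Rightarrow> real"
  assumes "finite S" "\<forall>x\<in>S. f x \<ge> 0" "(\<Sum>x\<in>S. f x) = 1"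
    and "k \<ge> 2" "x\<^sub>0 \<in> S" "f x\<^sub>0 \<noteq> 1 / real (card S)"
  shows "real (card S) * (1 / real (card S)) ^ k < (\<Sum>x\<in>S. f x ^ k)"
proof -
  let ?a = "1 / real (card S)"
  have "card S > 0"
    using assms(1,5) card_gt_0_iff by blast
  then have "?a ^ k + real k * ?a ^ (k - 1) * (f x\<^sub>0 - ?a) < f x\<^sub>0 ^ k"
    using assms(2,4-6) by (intro power_gt_tangent) auto
  moreover have "\<forall>x\<in>S. ?a ^ k + real k * ?a ^ (k - 1) * (f x - ?a) \<le> f x ^ k"
    using assms(2) by (intro ballI power_ge_tangent) auto
  ultimately have "(\<Sum>x\<in>S. ?a ^ k + real k * ?a ^ (k - 1) * (f x - ?a)) < (\<Sum>x\<in>S. f x ^ k)"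
    using assms(5) by (intro sum_strict_mono_ex1[OF assms(1)]) auto
  then show ?thesis
    unfolding sum_tangent_uniform[OF assms(1,3)] .
qed

lemma phi_bal_psi_kq:
  assumes "k \<ge> 1"
  shows "phi_bal k q (return_pmf (psi_kq k q)) \<mu> = (\<Sum>x\<in>Om q. \<mu> x) ^ k - (\<Sum>x\<in>Om q. \<mu> x ^ k)"
  unfolding phi_bal_def Ekq_return_pmf sum_psi_kq_prod[OF assms, of q "\<lambda>_. \<mu>"] by simp

lemma prop_BAL_psi_kq:
  assumes "k \<ge> 1" "q \<ge> 1"
  shows "prop_BAL k q (return_pmf (psi_kq k q))"
  unfolding prop_BAL_def phi_bal_psi_kq[OF assms(1)]
proof (intro conjI ballI allI impI)
  fix \<mu> \<nu> and t :: real
  assume \<mu>: "\<mu> \<in> distrs q" and \<nu>: "\<nu> \<in> distrs q" and t: "0 \<le> t \<and> t \<le> 1"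
  have sums: "(\<Sum>x\<in>Om q. \<mu> x) = 1" "(\<Sum>x\<in>Om q. \<nu> x) = 1"
    "(\<Sum>x\<in>Om q. t * \<mu> x + (1 - t) * \<nu> x) = 1"
    using \<mu> \<nu> by (simp_all add: distrs_def sum.distrib flip: sum_distrib_left)
  have "(t * \<mu> x + (1 - t) * \<nu> x) ^ k \<le> t * \<mu> x ^ k + (1 - t) * \<nu> x ^ k" for x
    using convex_onD[OF convex_on_power_nonneg, of "1 - t" "\<mu> x" "\<nu> x" k] \<mu> \<nu> t
    by (simp add: distrs_def)
  then have "(\<Sum>x\<in>Om q. (t * \<mu> x + (1 - t) * \<nu> x) ^ k)
      \<le> (\<Sum>x\<in>Om q. t * \<mu> x ^ k + (1 - t) * \<nu> x ^ k)"
    by (rule sum_mono)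
  also have "\<dots> = t * (\<Sum>x\<in>Om q. \<mu> x ^ k) + (1 - t) * (\<Sum>x\<in>Om q. \<nu> x ^ k)"
    by (simp add: sum.distrib sum_distrib_left)
  finally have "(\<Sum>x\<in>Om q. (t * \<mu> x + (1 - t) * \<nu> x) ^ k)
      \<le> t * (\<Sum>x\<in>Om q. \<mu> x ^ k) + (1 - t) * (\<Sum>x\<in>Om q. \<nu> x ^ k)" .
  then show "t * ((\<Sum>x\<in>Om q. \<mu> x) ^ k - (\<Sum>x\<in>Om q. \<mu> x ^ k))
      + (1 - t) * ((\<Sum>x\<in>Om q. \<nu> x) ^ k - (\<Sum>x\<in>Om q. \<nu> x ^ k))
      \<le> (\<Sum>x\<in>Om q. t * \<mu> x + (1 - t) * \<nu> x) ^ k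
        - (\<Sum>x\<in>Om q. (t * \<mu> x + (1 - t) * \<nu> x) ^ k)"
    unfolding sums by (simp add: algebra_simps)
next
  fix \<mu> assume \<mu>: "\<mu> \<in> distrs q"
  have "real q * (1 / real q) ^ k \<le> (\<Sum>x\<in>Om q. \<mu> x ^ k)"
    using sum_power_ge_uniform[of "Om q" \<mu> k] \<mu> by (simp add: distrs_def)
  moreover have "(\<Sum>x\<in>Om q. unif q x) = 1" "(\<Sum>x\<in>Om q. unif q x ^ k) = real q * (1 / real q) ^ k"
    using assms(2) by (simp_all add: unif_def)
  ultimately show "(\<Sum>x\<in>Om q. \<mu> x) ^ k - (\<Sum>x\<in>Om q. \<mu> x ^ k)
      \<le> (\<Sum>x\<in>Om q. unif q x) ^ k - (\<Sum>x\<in>Om q. unif q x ^ k)"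
    using \<mu> by (simp add: distrs_def)
qed

lemma phi_min_psi_kq:
  assumes "k \<ge> 1"
  shows "phi_min k q (return_pmf (psi_kq k q)) \<rho> =
     ((\<Sum>x\<in>Om q. \<Sum>y\<in>Om q. \<rho> (x, y)) ^ k - (\<Sum>x\<in>Om q. (\<Sum>y\<in>Om q. \<rho> (x, y)) ^ k))
   - ((\<Sum>y\<in>Om q. (\<Sum>x\<in>Om q. \<rho> (x, y)) ^ k) - (\<Sum>y\<in>Om q. \<Sum>x\<in>Om q. \<rho> (x, y) ^ k))"
proof -
  let ?p = "psi_kq k q"
  define R where "R = (\<lambda>x. \<Sum>y\<in>Om q. \<rho> (x, y))"
  have "phi_min k q (return_pmf ?p) \<rho>
      = (\<Sum>\<sigma>\<in>tuples k q. ?p \<sigma> * (\<Sum>\<tau>\<in>tuples k q. ?p \<tau> * (\<Prod>i\<in>{1..k}. \<rho> (\<sigma> i, \<tau> i))))"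
    unfolding phi_min_def by (simp add: sum_distrib_left mult.assoc)
  also have "\<dots> = (\<Sum>\<sigma>\<in>tuples k q. ?p \<sigma> * ((\<Prod>i\<in>{1..k}. R (\<sigma> i))
      - (\<Sum>y\<in>Om q. \<Prod>i\<in>{1..k}. \<rho> (\<sigma> i, y))))"
    unfolding R_def by (intro sum.cong refl arg_cong2[where f="(*)"] sum_psi_kq_prod[OF assms])
  also have "\<dots> = (\<Sum>\<sigma>\<in>tuples k q. ?p \<sigma> * (\<Prod>i\<in>{1..k}. R (\<sigma> i)))
        - (\<Sum>y\<in>Om q. \<Sum>\<sigma>\<in>tuples k q. ?p \<sigma> * (\<Prod>i\<in>{1..k}. \<rho> (\<sigma> i, y)))"
    by (simp add: right_diff_distrib sum_subtractf sum_distrib_left sum.swap[of _ "Om q"])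
  also have "(\<Sum>\<sigma>\<in>tuples k q. ?p \<sigma> * (\<Prod>i\<in>{1..k}. R (\<sigma> i)))
      = (\<Sum>x\<in>Om q. R x) ^ k - (\<Sum>x\<in>Om q. R x ^ k)"
    using sum_psi_kq_prod[OF assms, of q "\<lambda>_. R"] by simp
  also have "(\<Sum>y\<in>Om q. \<Sum>\<sigma>\<in>tuples k q. ?p \<sigma> * (\<Prod>i\<in>{1..k}. \<rho> (\<sigma> i, y)))
      = (\<Sum>y\<in>Om q. (\<Sum>x\<in>Om q. \<rho> (x, y)) ^ k - (\<Sum>x\<in>Om q. \<rho> (x, y) ^ k))"
    using sum_psi_kq_prod[OF assms, of q "\<lambda>_ x. \<rho> (x, _)"] by (intro sum.cong refl) simp
  finally show ?thesis
    unfolding R_def by (simp add: sum_subtractf)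
qed

lemma phi_min_psi_kq_coupling:
  assumes "k \<ge> 1" "q \<ge> 1" "\<rho> \<in> couplings q"
  shows "phi_min k q (return_pmf (psi_kq k q)) \<rho> =
     1 - 2 * (real q * (1 / real q) ^ k) + (\<Sum>p\<in>Om q \<times> Om q. \<rho> p ^ k)"
proof -
  have rows: "\<And>x. x \<in> Om q \<Longrightarrow> (\<Sum>y\<in>Om q. \<rho> (x, y)) = 1 / real q"
   and cols: "\<And>y. y \<in> Om q \<Longrightarrow> (\<Sum>x\<in>Om q. \<rho> (x, y)) = 1 / real q"
    using assms(3) by (auto simp: couplings_def)
  have "(\<Sum>y\<in>Om q. \<Sum>x\<in>Om q. \<rho> (x, y) ^ k) = (\<Sum>p\<in>Om q \<times> Om q. \<rho> p ^ k)"
    by (subst sum.swap) (simp add: sum.cartesian_product split_def)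
  then show ?thesis
    unfolding phi_min_psi_kq[OF assms(1)] using rows cols assms(2) by simp
qed

lemma unif2_in_couplings: "q \<ge> 1 \<Longrightarrow> unif2 q \<in> couplings q"
  unfolding couplings_def unif2_def by (auto simp: power2_eq_square)

lemma couplings_neq_unif2:
  assumes "\<rho> \<in> couplings q" "\<rho> \<noteq> unif2 q"
  shows "\<exists>p\<in>Om q \<times> Om q. \<rho> p \<noteq> 1 / real (card (Om q \<times> Om q))"
proof -
  obtain p where ne: "\<rho> p \<noteq> unif2 q p"
    using assms(2) by blast
  have "p \<in> Om q \<times> Om q"
  proof (rule ccontr)
    assume outside: "p \<notin> Om q \<times> Om q"
    then have "\<rho> p = 0"
      using assms(1) unfolding couplings_def by blast
    moreover have "unif2 q p = 0"
      using outside by (simp add: unif2_def)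
    ultimately show False
      using ne by simp
  qed
  with ne show ?thesis
    by (auto simp: unif2_def card_cartesian_product power2_eq_square)
qed

lemma prop_MIN_psi_kq:
  assumes "k \<ge> 2" "q \<ge> 1"
  shows "prop_MIN k q (return_pmf (psi_kq k q))"
proof -
  let ?S = "Om q \<times> Om q"
  let ?phi = "phi_min k q (return_pmf (psi_kq k q))"
  let ?min = "real (card ?S) * (1 / real (card ?S)) ^ k"
  have phi_eq: "?phi \<rho> = 1 - 2 * (real q * (1 / real q) ^ k) + (\<Sum>p\<in>?S. \<rho> p ^ k)"
    if "\<rho> \<in> couplings q" for \<rho>
    using phi_min_psi_kq_coupling[OF _ assms(2) that] assms(1) by simp
  have unif: "(\<Sum>p\<in>?S. unif2 q p ^ k) = ?min"
    by (simp add: unif2_def card_cartesian_product power2_eq_square)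
  have coupling: "\<forall>p\<in>?S. 0 \<le> \<rho> p" "(\<Sum>p\<in>?S. \<rho> p) = 1" if "\<rho> \<in> couplings q" for \<rho>
    using that by (simp_all add: couplings_def)
  have "?phi (unif2 q) \<le> ?phi \<rho>" if "\<rho> \<in> couplings q" for \<rho>
    unfolding phi_eq[OF that] phi_eq[OF unif2_in_couplings[OF assms(2)]] unif
    using sum_power_ge_uniform[of ?S \<rho> k] coupling[OF that] by simp
  moreover have "\<rho> = unif2 q" if \<rho>: "\<rho> \<in> couplings q" and "?phi \<rho> = ?phi (unif2 q)" for \<rho>
  proof (rule ccontr)
    assume "\<rho> \<noteq> unif2 q"
    then obtain p where "p \<in> ?S" "\<rho> p \<noteq> 1 / real (card ?S)"
      using couplings_neq_unif2[OF \<rho>] by blast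
    have "?min < (\<Sum>p\<in>?S. \<rho> p ^ k)"
      using sum_power_gt_uniform[of ?S \<rho> k p] coupling[OF that(1)] \<open>p \<in> ?S\<close>
        \<open>\<rho> p \<noteq> 1 / real (card ?S)\<close> assms(1) by simp
    then show False
      using that unfolding phi_eq[OF that(1)] phi_eq[OF unif2_in_couplings[OF assms(2)]] unif
      by simp
  qed
  ultimately show ?thesis
    unfolding prop_MIN_def using unif2_in_couplings[OF assms(2)] by blast
qed

definition edges_within :: "'v set \<Rightarrow> 'v set set" where
  "edges_within W = {{u, v} | u v. u \<in> W \<and> v \<in> W \<and> u \<noteq> v}"

definition is_path :: "'v set set \<Rightarrow> 'v list \<Rightarrow> bool" where
  "is_path E vs \<longleftrightarrow> distinct vs \<and> (\<forall>i. Suc i < length vs \<longrightarrow> {vs ! i, vs ! Suc i} \<in> E)"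

definition at_most_one_cycle :: "'v set set \<Rightarrow> bool" where
  "at_most_one_cycle E \<longleftrightarrow> (\<forall>C C'. is_cycle E C \<longrightarrow> is_cycle E C' \<longrightarrow> C = C')"

lemma finite_edges_within: "finite W \<Longrightarrow> finite (edges_within W)"
  by (rule finite_subset[of _ "Pow W"]) (auto simp: edges_within_def)

lemma edges_within_other_end:
  assumes "e \<in> edges_within W" "v \<in> e"
  shows "\<exists>w. e = {v, w} \<and> w \<noteq> v \<and> w \<in> W"
  using assms unfolding edges_within_def by (auto simp: insert_commute)

lemma is_cycle_mono: "E \<subseteq> E' \<Longrightarrow> is_cycle E C \<Longrightarrow> is_cycle E' C"
  unfolding is_cycle_def by blast

lemma at_most_one_cycle_mono: "E \<subseteq> E' \<Longrightarrow> at_most_one_cycle E' \<Longrightarrow> at_most_one_cycle E"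
  unfolding at_most_one_cycle_def using is_cycle_mono by blast

lemma is_path_snoc:
  assumes "is_path E vs" "vs \<noteq> []" "w \<notin> set vs" "{last vs, w} \<in> E"
  shows "is_path E (vs @ [w])"
  unfolding is_path_def
proof (intro conjI allI impI)
  show "distinct (vs @ [w])"
    using assms(1,3) by (simp add: is_path_def)
  fix i assume i: "Suc i < length (vs @ [w])"
  show "{(vs @ [w]) ! i, (vs @ [w]) ! Suc i} \<in> E"
  proof (cases "Suc i < length vs")
    case True
    then show ?thesis using assms(1) by (simp add: nth_append is_path_def)
  next
    case False
    then have "i = length vs - 1" using i by simp
    then show ?thesis using assms(2,4) by (simp add: nth_append last_conv_nth)
  qed
qed

text \<open>A chord from the last vertex of a path back to a vertex \<open>j\<close> closes the cycle formed by
  the vertices from \<open>j\<close> onwards.\<close>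
lemma is_cycle_path_chord:
  assumes p: "is_path E vs" and j: "j + 2 < length vs" and e: "{last vs, vs ! j} \<in> E"
  shows "\<exists>C. is_cycle E C"
proof -
  define cs where "cs = drop j vs"
  define L where "L = length cs"
  have L: "L = length vs - j" "L \<ge> 3" using j by (auto simp: L_def cs_def)
  have dist: "distinct cs" using p by (simp add: cs_def is_path_def)
  have nth: "\<And>i. i < L \<Longrightarrow> cs ! i = vs ! (j + i)" using j by (simp add: cs_def L_def)
  have "{cs ! i, cs ! ((i + 1) mod L)} \<in> E" if i: "i < L" for i
  proof (cases "Suc i < L")
    case True
    then have "Suc (j + i) < length vs" using L by simp
    then show ?thesis using p nth[OF i] nth[OF True] True unfolding is_path_def by simp
  next
    case False
    then have "i + 1 = L" using i by simp
    then have "i = L - 1" "(i + 1) mod L = 0" by simp_all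
    moreover have "last vs = vs ! (length vs - 1)"
      using j by (cases vs rule: rev_cases) (auto simp: nth_append)
    ultimately show ?thesis using e nth[OF i] nth[of 0] L by (simp add: insert_commute)
  qed
  then show ?thesis
    unfolding is_cycle_def using dist L unfolding L_def by blast
qed

lemma exists_longest_path:
  assumes "finite W" "E \<subseteq> edges_within W" "E \<noteq> {}"
  obtains vs where "is_path E vs" "set vs \<subseteq> W" "length vs \<ge> 2"
    "\<And>ys. is_path E ys \<Longrightarrow> set ys \<subseteq> W \<Longrightarrow> length ys \<le> length vs"
proof -
  define Ps where "Ps = {vs. is_path E vs \<and> set vs \<subseteq> W}"
  obtain a b where "{a, b} \<in> E" "a \<in> W" "b \<in> W" "a \<noteq> b"
    using assms(2,3) unfolding edges_within_def by force
  then have ab: "[a, b] \<in> Ps" by (auto simp: Ps_def is_path_def less_Suc_eq)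
  moreover have "length vs < Suc (card W)" if "vs \<in> Ps" for vs
  proof -
    have "length vs = card (set vs)"
      using that by (simp add: Ps_def is_path_def distinct_card)
    also have "\<dots> \<le> card W"
      using that assms(1) by (intro card_mono) (auto simp: Ps_def)
    finally show ?thesis by simp
  qed
  ultimately obtain vs where "vs \<in> Ps" "\<And>ys. ys \<in> Ps \<Longrightarrow> length ys \<le> length vs"
    using ex_has_greatest_nat[of "\<lambda>vs. vs \<in> Ps" "[a, b]" length "Suc (card W)"] by blast
  with ab show thesis
    using that[of vs] unfolding Ps_def by fastforce
qed

text \<open>The last vertex of a longest path is a leaf: a further neighbour outside the path would
  extend it, one on the path would close a cycle.\<close>
lemma acyclic_has_leaf:
  assumes "finite W" "E \<subseteq> edges_within W" "\<nexists>C. is_cycle E C" "E \<noteq> {}"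
  shows "\<exists>v e. e \<in> E \<and> v \<in> e \<and> (\<forall>e'\<in>E. v \<in> e' \<longrightarrow> e' = e)"
proof -
  obtain vs where vs: "is_path E vs" "set vs \<subseteq> W" "length vs \<ge> 2"
    and longest: "\<And>ys. is_path E ys \<Longrightarrow> set ys \<subseteq> W \<Longrightarrow> length ys \<le> length vs"
    using exists_longest_path[OF assms(1,2,4)] by blast
  define n where "n = length vs"
  define v where "v = last vs"
  define u where "u = vs ! (n - 2)"
  have vs_ne: "vs \<noteq> []" using vs(3) by auto
  then have v: "v = vs ! (n - 1)" by (simp add: v_def n_def last_conv_nth)
  have "Suc (n - 2) < length vs" "Suc (n - 2) = n - 1" using vs(3) by (simp_all add: n_def)
  moreover have "{vs ! (n - 2), vs ! Suc (n - 2)} \<in> E"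
    using vs(1) calculation(1) unfolding is_path_def by blast
  ultimately have uv: "{u, v} \<in> E"
    by (simp add: u_def v)
  have "e' = {u, v}" if e': "e' \<in> E" "v \<in> e'" for e'
  proof (rule ccontr)
    assume ne: "e' \<noteq> {u, v}"
    obtain w where w: "e' = {v, w}" "w \<noteq> v" "w \<in> W"
      using edges_within_other_end[of e' W v] e' assms(2) by blast
    show False
    proof (cases "w \<in> set vs")
      case False
      have "is_path E (vs @ [w])"
        using is_path_snoc[OF vs(1) vs_ne False] w(1) e'(1) by (simp add: v_def)
      then show False using longest[of "vs @ [w]"] vs(2) w(3) by simp
    next
      case True
      then obtain j where j: "j < n" "vs ! j = w" by (auto simp: in_set_conv_nth n_def)
      have "j \<noteq> n - 1" using j(2) w(2) v by auto
      moreover have "j \<noteq> n - 2" using j(2) w(1) ne by (auto simp: u_def insert_commute)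
      ultimately have "j + 2 < length vs" using j(1) by (simp add: n_def)
      moreover have "{last vs, vs ! j} \<in> E" using j(2) w(1) e'(1) by (simp add: v_def)
      ultimately show False using is_cycle_path_chord[OF vs(1)] assms(3) by blast
    qed
  qed
  then show ?thesis using uv by blast
qed

lemma card_edges_acyclic:
  "finite W \<Longrightarrow> E \<subseteq> edges_within W \<Longrightarrow> \<nexists>C. is_cycle E C \<Longrightarrow> W \<noteq> {} \<Longrightarrow> card E < card W"
proof (induction "card W" arbitrary: W E rule: less_induct)
  case less
  show ?case
  proof (cases "E = {}")
    case True
    then show ?thesis using less.prems by (simp add: card_gt_0_iff)
  next
    case False
    then obtain v e where leaf: "e \<in> E" "v \<in> e" "\<forall>e'\<in>E. v \<in> e' \<longrightarrow> e' = e"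
      using acyclic_has_leaf[OF less.prems(1-3)] by blast
    obtain w where w: "e = {v, w}" "w \<noteq> v" "w \<in> W"
      using edges_within_other_end[of e W v] leaf less.prems(2) by blast
    have v: "v \<in> W"
      using leaf less.prems(2) unfolding edges_within_def by blast
    have "E - {e} \<subseteq> edges_within (W - {v})"
    proof
      fix e' assume "e' \<in> E - {e}"
      then have "e' \<in> edges_within W" "v \<notin> e'" using less.prems(2) leaf(3) by auto
      then show "e' \<in> edges_within (W - {v})" unfolding edges_within_def by auto
    qed
    moreover have "\<nexists>C. is_cycle (E - {e}) C"
      using less.prems(3) is_cycle_mono[of "E - {e}" E] by blast
    moreover have "card (W - {v}) < card W"
      using less.prems(1) v by (rule card_Diff1_less)
    moreover have "W - {v} \<noteq> {}"
      using w by auto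
    ultimately have "card (E - {e}) < card (W - {v})"
      using less.hyps less.prems(1) by blast
    moreover have "finite E"
      using less.prems(1,2) finite_edges_within finite_subset by blast
    ultimately show ?thesis
      using leaf(1) v by (simp add: card_Diff_singleton)
  qed
qed

text \<open>Deleting one edge of the unique cycle leaves a forest.\<close>
lemma card_edges_at_most_one_cycle:
  assumes "finite W" "E \<subseteq> edges_within W" "at_most_one_cycle E"
  shows "card E \<le> card W"
proof (cases "\<exists>C. is_cycle E C")
  case False
  then show ?thesis
    using card_edges_acyclic[OF assms(1,2) False] assms(2)
    by (cases "W = {}") (auto simp: edges_within_def)
next
  case True
  then obtain C vs where C: "is_cycle E C" and vs: "length vs \<ge> 3"
    "\<forall>i<length vs. {vs ! i, vs ! ((i + 1) mod length vs)} \<in> E"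
    "C = {{vs ! i, vs ! ((i + 1) mod length vs)} | i. i < length vs}"
    unfolding is_cycle_def by blast
  define e where "e = {vs ! 0, vs ! 1}"
  have "vs \<noteq> []" "1 mod length vs = 1" using vs(1) by auto
  then have e: "e \<in> E" "e \<in> C"
    using vs(2)[rule_format, of 0] vs(1) unfolding e_def vs(3) by (auto intro!: exI[of _ 0])
  have "\<nexists>C'. is_cycle (E - {e}) C'"
  proof
    assume "\<exists>C'. is_cycle (E - {e}) C'"
    then obtain C' where C': "is_cycle (E - {e}) C'" by blast
    then have "C' = C" using assms(3) C is_cycle_mono[of "E - {e}" E] unfolding at_most_one_cycle_def by blast
    moreover have "C' \<subseteq> E - {e}" using C' unfolding is_cycle_def by blast
    ultimately show False using e(2) by blast
  qed
  moreover have "W \<noteq> {}" using e(1) assms(2) by (auto simp: edges_within_def)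
  ultimately have "card (E - {e}) < card W"
    using card_edges_acyclic[OF assms(1)] assms(2) by blast
  moreover have "finite E" using assms(1,2) finite_edges_within finite_subset by blast
  ultimately show ?thesis using e(1) by (simp add: card_Diff_singleton)
qed

definition var_degree :: "nat \<Rightarrow> nat set \<Rightarrow> (nat \<Rightarrow> nat \<Rightarrow> nat) \<Rightarrow> nat \<Rightarrow> nat" where
  "var_degree k F dd x = card {a\<in>F. x \<in> dd a ` {1..k}}"

lemma fg_edges_mono: "F' \<subseteq> F \<Longrightarrow> fg_edges k F' dd \<subseteq> fg_edges k F dd"
  unfolding fg_edges_def by blast

lemma fg_edges_within: "fg_edges k F dd \<subseteq> edges_within (Inl ` (\<Union>a\<in>F. dd a ` {1..k}) \<union> Inr ` F)"
proof
  fix e assume "e \<in> fg_edges k F dd"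
  then obtain x a where e: "e = {Inl x, Inr a}" and "a \<in> F" "x \<in> dd a ` {1..k}"
    unfolding fg_edges_def by blast
  then have "Inl x \<in> Inl ` (\<Union>a\<in>F. dd a ` {1..k}) \<union> Inr ` F" "Inr a \<in> Inl ` (\<Union>a\<in>F. dd a ` {1..k}) \<union> Inr ` F"
    by blast+
  then show "e \<in> edges_within (Inl ` (\<Union>a\<in>F. dd a ` {1..k}) \<union> Inr ` F)"
    unfolding edges_within_def e by blast
qed

lemma card_incidences:
  assumes "finite F" "\<forall>a\<in>F. inj_on (dd a) {1..k}"
  shows "card (SIGMA a:F. dd a ` {1..k}) = k * card F"
proof -
  have "card (SIGMA a:F. dd a ` {1..k}) = (\<Sum>a\<in>F. card (dd a ` {1..k}))"
    using assms(1) by simp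
  also have "\<dots> = (\<Sum>a\<in>F. k)"
    using assms(2) by (intro sum.cong refl) (simp add: card_image)
  finally show ?thesis by simp
qed

lemma card_fg_edges:
  assumes "finite F" "\<forall>a\<in>F. inj_on (dd a) {1..k}"
  shows "card (fg_edges k F dd) = k * card F"
proof -
  have "fg_edges k F dd = (\<lambda>p. {Inl (snd p), Inr (fst p)}) ` (SIGMA a:F. dd a ` {1..k})"
    unfolding fg_edges_def by force
  moreover have "inj_on (\<lambda>p. {Inl (snd p), Inr (fst p)} :: (nat + nat) set) (SIGMA a:F. dd a ` {1..k})"
    by (rule inj_onI) (auto simp: doubleton_eq_iff prod_eq_iff)
  ultimately show ?thesis
    using card_incidences[OF assms] by (simp add: card_image)
qed

lemma sum_var_degree:
  assumes "finite F" "\<forall>a\<in>F. inj_on (dd a) {1..k}"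
  shows "(\<Sum>x\<in>(\<Union>a\<in>F. dd a ` {1..k}). var_degree k F dd x) = k * card F"
  unfolding var_degree_def
proof (rule sum_multicount)
  show "finite (\<Union>a\<in>F. dd a ` {1..k})" "finite F"
    using assms(1) by auto
  show "\<forall>a\<in>F. card {x \<in> \<Union>a\<in>F. dd a ` {1..k}. x \<in> dd a ` {1..k}} = k"
  proof
    fix a assume "a \<in> F"
    then have "{x \<in> \<Union>a\<in>F. dd a ` {1..k}. x \<in> dd a ` {1..k}} = dd a ` {1..k}"
      by blast
    then show "card {x \<in> \<Union>a\<in>F. dd a ` {1..k}. x \<in> dd a ` {1..k}} = k"
      using assms(2) \<open>a \<in> F\<close> by (simp add: card_image)
  qed
qed

lemma exists_low_degree_variable:
  assumes "k \<ge> 2" "q \<ge> 2" "k + q > 4"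
    and fin: "finite F" and ne: "F \<noteq> {}" and inj: "\<forall>a\<in>F. inj_on (dd a) {1..k}"
    and cycle: "at_most_one_cycle (fg_edges k F dd)"
  shows "\<exists>x\<in>(\<Union>a\<in>F. dd a ` {1..k}). var_degree k F dd x < q"
proof (rule ccontr)
  let ?V = "\<Union>a\<in>F. dd a ` {1..k}"
  assume "\<not> ?thesis"
  then have high: "\<forall>x\<in>?V. q \<le> var_degree k F dd x" by (simp add: not_less)
  have "finite ?V" using fin by blast
  then have "card (fg_edges k F dd) \<le> card (Inl ` ?V \<union> Inr ` F :: (nat + nat) set)"
    using card_edges_at_most_one_cycle[OF _ fg_edges_within cycle] fin by blast
  also have "\<dots> = card ?V + card F"
    using \<open>finite ?V\<close> fin by (subst card_Un_disjoint) (auto simp: card_image)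
  finally have edges: "k * card F \<le> card ?V + card F"
    using card_fg_edges[OF fin inj] by simp
  have "q * card ?V = (\<Sum>x\<in>?V. q)" by simp
  also have "\<dots> \<le> (\<Sum>x\<in>?V. var_degree k F dd x)"
    by (rule sum_mono) (use high in blast)
  also have "\<dots> = k * card F"
    by (rule sum_var_degree[OF fin inj])
  finally have degrees: "q * card ?V \<le> k * card F" .
  have "card F > 0" using fin ne by (simp add: card_gt_0_iff)
  show False
  proof (cases "k \<ge> 3")
    case True
    then have "3 * card F \<le> k * card F" "2 * card ?V \<le> q * card ?V"
      using assms(2) by simp_all
    then show False using edges degrees \<open>card F > 0\<close> by linarith
  next
    case False
    then have "k = 2" using assms(1) by simp
    then have "2 * card F \<le> card ?V + card F" "q * card ?V \<le> 2 * card F"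
      "3 * card ?V \<le> q * card ?V"
      using edges degrees assms(3) by simp_all
    then show False using \<open>card F > 0\<close> by linarith
  qed
qed

lemma exists_other_in_image:
  assumes "inj_on f A" "card A \<ge> 2"
  shows "\<exists>y\<in>f ` A. y \<noteq> x"
proof (rule ccontr)
  assume "\<not> ?thesis"
  then have "card (f ` A) \<le> card {x}"
    by (intro card_mono) auto
  then show False
    using assms by (simp add: card_image)
qed

lemma exists_notin_image:
  assumes "finite A" "card A < card B"
  shows "\<exists>c\<in>B. c \<notin> g ` A"
proof (rule ccontr)
  assume "\<not> ?thesis"
  then have "card B \<le> card (g ` A)"
    using assms(1) by (intro card_mono) auto
  then show False
    using card_image_le[OF assms(1), of g] assms(2) by linarith
qed

text \<open>Each constraint through \<open>x\<close> has another variable \<open>y a\<close>; these forbid fewer than \<open>q\<close>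
  colours for \<open>x\<close>, and recolouring \<open>x\<close> leaves the other constraints untouched.\<close>
lemma recolour_low_degree_variable:
  assumes "k \<ge> 2" "finite F" "\<forall>a\<in>F. inj_on (dd a) {1..k}" "x \<in> V" "var_degree k F dd x < q"
    and \<sigma>: "\<sigma> \<in> V \<rightarrow> Om q" "\<forall>a\<in>F. x \<notin> dd a ` {1..k} \<longrightarrow> \<not> monochromatic k (\<sigma> \<circ> dd a)"
  shows "\<exists>\<sigma>'. \<sigma>' \<in> V \<rightarrow> Om q \<and> (\<forall>a\<in>F. \<not> monochromatic k (\<sigma>' \<circ> dd a))"
proof -
  define A where "A = {a\<in>F. x \<in> dd a ` {1..k}}"
  have "\<forall>a\<in>A. \<exists>y. y \<in> dd a ` {1..k} \<and> y \<noteq> x"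
  proof
    fix a assume "a \<in> A"
    then have "inj_on (dd a) {1..k}"
      using assms(3) by (simp add: A_def)
    then show "\<exists>y. y \<in> dd a ` {1..k} \<and> y \<noteq> x"
      using exists_other_in_image[of "dd a" "{1..k}" x] assms(1) by auto
  qed
  from bchoice[OF this] obtain y where y: "\<forall>a\<in>A. y a \<in> dd a ` {1..k} \<and> y a \<noteq> x"
    by blast
  have "finite A" "card A < card (Om q)"
    using assms(2,5) by (simp_all add: A_def var_degree_def)
  then obtain c where c: "c \<in> Om q" "\<forall>a\<in>A. \<sigma> (y a) \<noteq> c"
    using exists_notin_image[of A "Om q" "\<lambda>a. \<sigma> (y a)"] by blast
  have "\<not> monochromatic k (\<sigma>(x := c) \<circ> dd a)" if a: "a \<in> F" for a
  proof (cases "a \<in> A")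
    case True
    then obtain i j where ij: "i \<in> {1..k}" "dd a i = x" "j \<in> {1..k}" "dd a j = y a"
      using y by (auto simp: A_def)
    then have "(\<sigma>(x := c) \<circ> dd a) i \<noteq> (\<sigma>(x := c) \<circ> dd a) j"
      using y c(2) True by auto
    then show ?thesis
      using ij(1,3) unfolding monochromatic_iff by blast
  next
    case False
    then have "x \<notin> dd a ` {1..k}" using a by (simp add: A_def)
    then have "monochromatic k (\<sigma>(x := c) \<circ> dd a) \<longleftrightarrow> monochromatic k (\<sigma> \<circ> dd a)"
      by (intro monochromatic_cong) auto
    then show ?thesis
      using \<sigma>(2) a \<open>x \<notin> dd a ` {1..k}\<close> by simp
  qed
  moreover have "\<sigma>(x := c) \<in> V \<rightarrow> Om q"
    using \<sigma>(1) c(1) by auto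
  ultimately show ?thesis by blast
qed

lemma exists_non_monochromatic_colouring:
  assumes "k \<ge> 2" "q \<ge> 2" "k + q > 4"
  shows "finite F \<Longrightarrow> \<forall>a\<in>F. dd a ` {1..k} \<subseteq> V \<Longrightarrow> \<forall>a\<in>F. inj_on (dd a) {1..k}
    \<Longrightarrow> at_most_one_cycle (fg_edges k F dd)
    \<Longrightarrow> \<exists>\<sigma>. \<sigma> \<in> V \<rightarrow> Om q \<and> (\<forall>a\<in>F. \<not> monochromatic k (\<sigma> \<circ> dd a))"
proof (induction "card F" arbitrary: F rule: less_induct)
  case less
  show ?case
  proof (cases "F = {}")
    case True
    have "(\<lambda>_. 1) \<in> V \<rightarrow> Om q" using assms(2) by (auto simp: Om_def)
    then show ?thesis using True by blast
  next
    case False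
    then obtain x where x: "x \<in> (\<Union>a\<in>F. dd a ` {1..k})" "var_degree k F dd x < q"
      using exists_low_degree_variable[OF assms less.prems(1) False less.prems(3-4)] by blast
    define F' where "F' = {a\<in>F. x \<notin> dd a ` {1..k}}"
    have "F' \<subset> F" using x(1) by (auto simp: F'_def)
    have "card F' < card F"
      using less.prems(1) \<open>F' \<subset> F\<close> by (rule psubset_card_mono)
    moreover have "finite F'" "\<forall>a\<in>F'. dd a ` {1..k} \<subseteq> V" "\<forall>a\<in>F'. inj_on (dd a) {1..k}"
      using less.prems(1-3) by (simp_all add: F'_def)
    moreover have "at_most_one_cycle (fg_edges k F' dd)"
      using at_most_one_cycle_mono[OF fg_edges_mono less.prems(4)] \<open>F' \<subset> F\<close> by blast
    ultimately obtain \<sigma> where "\<sigma> \<in> V \<rightarrow> Om q" "\<forall>a\<in>F'. \<not> monochromatic k (\<sigma> \<circ> dd a)"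
      using less.hyps by blast
    moreover have "x \<in> V" using x(1) less.prems(2) by blast
    ultimately show ?thesis
      using recolour_low_degree_variable[OF assms(1) less.prems(1,3) _ x(2)] by (auto simp: F'_def)
  qed
qed

lemma prop_UNI_psi_kq:
  assumes "k \<ge> 2" "q \<ge> 2" "k + q > 4"
  shows "prop_UNI k q {psi_kq k q}"
  unfolding prop_UNI_def
proof (intro allI impI)
  fix V F :: "nat set" and dd :: "nat \<Rightarrow> nat \<Rightarrow> nat" and c :: "nat \<Rightarrow> cfun"
  assume "finite V \<and> finite F \<and> (\<forall>a\<in>F. c a \<in> {psi_kq k q}) \<and> (\<forall>a\<in>F. \<forall>i\<in>{1..k}. dd a i \<in> V)
       \<and> (\<forall>a\<in>F. inj_on (dd a) {1..k}) \<and> unicyclic (fg_vertices V F) (fg_edges k F dd)"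
  then have "finite F" "\<forall>a\<in>F. c a = psi_kq k q" "\<forall>a\<in>F. dd a ` {1..k} \<subseteq> V"
    "\<forall>a\<in>F. inj_on (dd a) {1..k}" "at_most_one_cycle (fg_edges k F dd)"
    unfolding unicyclic_def at_most_one_cycle_def by blast+
  then obtain \<sigma> where \<sigma>: "\<sigma> \<in> V \<rightarrow> Om q" "\<forall>a\<in>F. \<not> monochromatic k (\<sigma> \<circ> dd a)"
    using exists_non_monochromatic_colouring[OF assms] by blast
  have "c a (\<lambda>i\<in>{1..k}. \<sigma> (dd a i)) = 1" if "a \<in> F" for a
    using that \<sigma>(2) \<open>\<forall>a\<in>F. c a = psi_kq k q\<close>
      monochromatic_cong[of k "\<lambda>i\<in>{1..k}. \<sigma> (dd a i)" "\<sigma> \<circ> dd a"]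
    by (simp add: psi_kq_eq)
  then have "(\<Prod>a\<in>F. c a (\<lambda>i\<in>{1..k}. \<sigma> (dd a i))) = 1" by simp
  then show "\<exists>\<sigma>. \<sigma> \<in> V \<rightarrow> Om q \<and> 0 < (\<Prod>a\<in>F. c a (\<lambda>i\<in>{1..k}. \<sigma> (dd a i)))"
    using \<sigma>(1) by auto
qed

lemma integral_PiM_prod_subset:
  fixes f :: "'a \<Rightarrow> real"
  assumes "prob_space M" "finite I" "J \<subseteq> I" "integrable M f"
  shows "integrable (PiM I (\<lambda>_. M)) (\<lambda>x. \<Prod>i\<in>J. f (x i))"
    and "(\<integral>x. (\<Prod>i\<in>J. f (x i)) \<partial>PiM I (\<lambda>_. M)) = (\<integral>y. f y \<partial>M) ^ card J"
proof -
  interpret M: prob_space M by (rule assms(1))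
  interpret product_sigma_finite "\<lambda>_. M"
    by (simp add: product_sigma_finite_def M.sigma_finite_measure_axioms)
  let ?g = "\<lambda>i y. if i \<in> J then f y else 1"
  have prod_eq: "(\<Prod>i\<in>I. ?g i (x i)) = (\<Prod>i\<in>J. f (x i))" for x
  proof -
    have "(\<Prod>i\<in>I. ?g i (x i)) = (\<Prod>i\<in>{i\<in>I. i \<in> J}. f (x i))"
      using assms(2) by (simp add: prod.inter_filter)
    also have "{i\<in>I. i \<in> J} = J"
      using assms(3) by blast
    finally show ?thesis .
  qed
  have integrable: "integrable M (?g i)" for i
    using assms(4) by (cases "i \<in> J") simp_all
  have "integrable (PiM I (\<lambda>_. M)) (\<lambda>x. \<Prod>i\<in>I. ?g i (x i))"
    by (rule product_integrable_prod[OF assms(2) integrable])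
  then show "integrable (PiM I (\<lambda>_. M)) (\<lambda>x. \<Prod>i\<in>J. f (x i))"
    by (simp only: prod_eq)
  have "(\<integral>x. (\<Prod>i\<in>I. ?g i (x i)) \<partial>PiM I (\<lambda>_. M)) = (\<Prod>i\<in>I. \<integral>y. ?g i y \<partial>M)"
    using product_integral_prod[OF assms(2) integrable] .
  also have "\<dots> = (\<Prod>i\<in>I. if i \<in> J then (\<integral>y. f y \<partial>M) else 1)"
    by (intro prod.cong) (simp_all add: M.prob_space)
  also have "\<dots> = (\<integral>y. f y \<partial>M) ^ card J"
    using assms(2,3) by (simp add: prod.If_cases Int_absorb1)
  finally show "(\<integral>x. (\<Prod>i\<in>J. f (x i)) \<partial>PiM I (\<lambda>_. M)) = (\<integral>y. f y \<partial>M) ^ card J"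
    unfolding prod_eq .
qed

lemma integral_pair_measure_mult:
  fixes g :: "'a \<Rightarrow> real" and h :: "'b \<Rightarrow> real"
  assumes "prob_space A" "prob_space B"
    and g: "g \<in> borel_measurable A" "\<And>x. x \<in> space A \<Longrightarrow> \<bar>g x\<bar> \<le> c"
    and h: "h \<in> borel_measurable B" "\<And>y. y \<in> space B \<Longrightarrow> \<bar>h y\<bar> \<le> d"
  shows "integrable (A \<Otimes>\<^sub>M B) (\<lambda>z. g (fst z) * h (snd z))"
    and "(\<integral>z. g (fst z) * h (snd z) \<partial>(A \<Otimes>\<^sub>M B)) = (\<integral>x. g x \<partial>A) * (\<integral>y. h y \<partial>B)"
proof -
  interpret A: prob_space A by (rule assms(1))
  interpret B: prob_space B by (rule assms(2))
  interpret AB: pair_prob_space A B ..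
  show int: "integrable (A \<Otimes>\<^sub>M B) (\<lambda>z. g (fst z) * h (snd z))"
  proof (rule AB.integrable_const_bound[of _ "c * d"])
    show "AE z in A \<Otimes>\<^sub>M B. norm (g (fst z) * h (snd z)) \<le> c * d"
      using g(2) h(2) by (intro AE_I2) (auto simp: space_pair_measure abs_mult intro: mult_mono')
  qed (use g(1) h(1) in measurable)
  have "(\<integral>z. g (fst z) * h (snd z) \<partial>(A \<Otimes>\<^sub>M B)) = (\<integral>x. (\<integral>y. g x * h y \<partial>B) \<partial>A)"
    using AB.integral_fst'[OF int] by simp
  then show "(\<integral>z. g (fst z) * h (snd z) \<partial>(A \<Otimes>\<^sub>M B)) = (\<integral>x. g x \<partial>A) * (\<integral>y. h y \<partial>B)"
    by simp
qed

lemma integral_pair_measure_return_pmf: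
  fixes f :: "'a \<times> 'b \<Rightarrow> real"
  assumes "prob_space M" "f \<in> borel_measurable (M \<Otimes>\<^sub>M measure_pmf (return_pmf b))"
    and "integrable M (\<lambda>x. f (x, b))"
  shows "integrable (M \<Otimes>\<^sub>M measure_pmf (return_pmf b)) f"
    and "(\<integral>z. f z \<partial>(M \<Otimes>\<^sub>M measure_pmf (return_pmf b))) = (\<integral>x. f (x, b) \<partial>M)"
proof -
  interpret M: prob_space M by (rule assms(1))
  interpret pair_prob_space M "measure_pmf (return_pmf b)" ..
  show int: "integrable (M \<Otimes>\<^sub>M measure_pmf (return_pmf b)) f"
  proof (rule Fubini_integrable[OF assms(2)])
    show "integrable M (\<lambda>x. \<integral>y. norm (f (x, y)) \<partial>measure_pmf (return_pmf b))"
      using assms(3) by (simp add: integrable_norm)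
    show "AE x in M. integrable (measure_pmf (return_pmf b)) (\<lambda>y. f (x, y))"
      by (simp add: integrable_measure_pmf_finite)
  qed
  show "(\<integral>z. f z \<partial>(M \<Otimes>\<^sub>M measure_pmf (return_pmf b))) = (\<integral>x. f (x, b) \<partial>M)"
    using integral_fst'[OF int, symmetric] by simp
qed

lemma prob_space_centred_measures: "\<pi> \<in> centred_measures q \<Longrightarrow> prob_space \<pi>"
  by (simp add: centred_measures_def)

lemma space_centred_measures:
  assumes "\<pi> \<in> centred_measures q"
  shows "space \<pi> = distrs q"
proof -
  have "sets \<pi> = sets (restrict_space borel (distrs q))"
    using assms by (simp add: centred_measures_def)
  then have "space \<pi> = space (restrict_space borel (distrs q))"
    by (rule sets_eq_imp_space_eq)
  then show ?thesis
    by (simp add: space_restrict_space)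
qed

lemma measurable_centred_measures_eval:
  assumes "\<pi> \<in> centred_measures q"
  shows "(\<lambda>\<rho>. \<rho> \<omega>) \<in> borel_measurable \<pi>"
proof -
  have "sets \<pi> = sets (restrict_space borel (distrs q))"
    using assms by (simp add: centred_measures_def)
  moreover have "(\<lambda>\<rho>::nat \<Rightarrow> real. \<rho> \<omega>) \<in> borel_measurable (restrict_space borel (distrs q))"
    by (rule measurable_restrict_space1[OF measurable_product_coordinates])
  ultimately show ?thesis
    by (simp cong: measurable_cong_sets)
qed

lemma distrs_bounds:
  assumes "\<rho> \<in> distrs q"
  shows "0 \<le> \<rho> x" "\<rho> x \<le> 1"
proof -
  show "0 \<le> \<rho> x"
    using assms by (simp add: distrs_def)
  show "\<rho> x \<le> 1"
  proof (cases "x \<in> Om q")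
    case True
    then have "\<rho> x \<le> (\<Sum>y\<in>Om q. \<rho> y)"
      using assms by (intro member_le_sum) (auto simp: distrs_def)
    then show ?thesis using assms by (simp add: distrs_def)
  qed (use assms in \<open>simp add: distrs_def\<close>)
qed

definition words :: "nat \<Rightarrow> nat \<Rightarrow> (nat \<Rightarrow> nat) set" where
  "words l q = PiE {..<l} (\<lambda>_. Om q)"

definition word_prob :: "nat \<Rightarrow> (nat \<Rightarrow> nat) \<Rightarrow> (nat \<Rightarrow> real) \<Rightarrow> real" where
  "word_prob l w \<rho> = (\<Prod>j<l. \<rho> (w j))"

lemma word_prob_bounds: "\<rho> \<in> distrs q \<Longrightarrow> 0 \<le> word_prob l w \<rho> \<and> word_prob l w \<rho> \<le> 1"
  unfolding word_prob_def using distrs_bounds by (auto intro!: prod_nonneg prod_le_1)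

lemma integrable_word_prob:
  assumes "\<pi> \<in> centred_measures q"
  shows "integrable \<pi> (word_prob l w)"
proof -
  interpret prob_space \<pi>
    using prob_space_centred_measures[OF assms] .
  show ?thesis
  proof (rule integrable_const_bound[of _ 1])
    show "AE \<rho> in \<pi>. norm (word_prob l w \<rho>) \<le> 1"
      using word_prob_bounds by (intro AE_I2) (auto simp: space_centred_measures[OF assms])
    show "word_prob l w \<in> borel_measurable \<pi>"
      unfolding word_prob_def[abs_def] by (intro borel_measurable_prod measurable_centred_measures_eval[OF assms])
  qed
qed

lemma power_sum_prod_eq_sum_words:
  fixes r :: "nat \<Rightarrow> nat \<Rightarrow> real"
  shows "(\<Sum>x\<in>Om q. \<Prod>i\<in>I. r i x) ^ l = (\<Sum>w\<in>words l q. \<Prod>i\<in>I. word_prob l w (r i))"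
proof -
  have "(\<Sum>x\<in>Om q. \<Prod>i\<in>I. r i x) ^ l = (\<Prod>j<l. \<Sum>x\<in>Om q. \<Prod>i\<in>I. r i x)"
    by simp
  also have "\<dots> = (\<Sum>w\<in>words l q. \<Prod>j<l. \<Prod>i\<in>I. r i (w j))"
    unfolding words_def by (rule prod_sum_PiE) auto
  also have "\<dots> = (\<Sum>w\<in>words l q. \<Prod>i\<in>I. word_prob l w (r i))"
    unfolding word_prob_def by (subst prod.swap) (rule refl)
  finally show ?thesis .
qed

lemma one_minus_sum_psi_kq:
  assumes "k \<ge> 1" "\<forall>i\<in>{1..k}. r i \<in> distrs q"
  shows "1 - (\<Sum>\<tau>\<in>tuples k q. psi_kq k q \<tau> * (\<Prod>i\<in>{1..k}. r i (\<tau> i))) = (\<Sum>x\<in>Om q. \<Prod>i\<in>{1..k}. r i x)"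
proof -
  have "(\<Prod>i\<in>{1..k}. \<Sum>x\<in>Om q. r i x) = 1"
    using assms(2) by (intro prod.neutral) (simp add: distrs_def)
  then show ?thesis
    unfolding sum_psi_kq_prod[OF assms(1)] by simp
qed

definition POS_integrand :: "nat \<Rightarrow> nat \<Rightarrow> nat
    \<Rightarrow> ((nat \<Rightarrow> nat \<Rightarrow> real) \<times> (nat \<Rightarrow> nat \<Rightarrow> real)) \<times> cfun \<Rightarrow> real" where
  "POS_integrand k q l = (\<lambda>((r, r'), \<psi>).
      (1 - (\<Sum>\<tau>\<in>tuples k q. \<psi> \<tau> * (\<Prod>i\<in>{1..k}. r i (\<tau> i)))) ^ l
      + real (k - 1) * (1 - (\<Sum>\<tau>\<in>tuples k q. \<psi> \<tau> * (\<Prod>i\<in>{1..k}. r' i (\<tau> i)))) ^ l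
      - real k * (1 - (\<Sum>\<tau>\<in>tuples k q. \<psi> \<tau> * (r 1 (\<tau> 1) * (\<Prod>i\<in>{2..k}. r' i (\<tau> i))))) ^ l)"

lemma measurable_POS_integrand:
  assumes "k \<ge> 1" "\<pi> \<in> centred_measures q" "\<pi>' \<in> centred_measures q"
  shows "POS_integrand k q l
    \<in> borel_measurable ((PiM {1..k} (\<lambda>_. \<pi>) \<Otimes>\<^sub>M PiM {1..k} (\<lambda>_. \<pi>')) \<Otimes>\<^sub>M measure_pmf P)"
proof -
  let ?M = "(PiM {1..k} (\<lambda>_. \<pi>) \<Otimes>\<^sub>M PiM {1..k} (\<lambda>_. \<pi>')) \<Otimes>\<^sub>M measure_pmf P"
  have coordinates: "(\<lambda>z. fst (fst z) i \<omega>) \<in> borel_measurable ?M" "(\<lambda>z. snd (fst z) i \<omega>) \<in> borel_measurable ?M"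
    if "i \<in> {1..k}" for i \<omega>
    using measurable_compose[OF measurable_compose[OF measurable_compose[OF measurable_fst measurable_fst]
        measurable_component_singleton[OF that]] measurable_centred_measures_eval[OF assms(2)]]
      measurable_compose[OF measurable_compose[OF measurable_compose[OF measurable_fst measurable_snd]
        measurable_component_singleton[OF that]] measurable_centred_measures_eval[OF assms(3)]] .
  have constraint: "(\<lambda>z. snd z \<tau>) \<in> borel_measurable ?M" for \<tau>
    by (rule measurable_compose[OF measurable_snd]) simp
  have "POS_integrand k q l = (\<lambda>z.
      (1 - (\<Sum>\<tau>\<in>tuples k q. snd z \<tau> * (\<Prod>i\<in>{1..k}. fst (fst z) i (\<tau> i)))) ^ l
      + real (k - 1) * (1 - (\<Sum>\<tau>\<in>tuples k q. snd z \<tau> * (\<Prod>i\<in>{1..k}. snd (fst z) i (\<tau> i)))) ^ l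
      - real k * (1 - (\<Sum>\<tau>\<in>tuples k q. snd z \<tau> * (fst (fst z) 1 (\<tau> 1)
          * (\<Prod>i\<in>{2..k}. snd (fst z) i (\<tau> i))))) ^ l)"
    unfolding POS_integrand_def by (intro ext) (simp split: prod.split)
  then show ?thesis
    by (simp only:, intro borel_measurable_add borel_measurable_diff borel_measurable_times
        borel_measurable_power borel_measurable_sum borel_measurable_prod borel_measurable_const
        coordinates constraint) (use assms(1) in auto)
qed

lemma POS_integrand_psi_kq:
  assumes "k \<ge> 1" "\<forall>i\<in>{1..k}. r i \<in> distrs q" "\<forall>i\<in>{1..k}. r' i \<in> distrs q"
  shows "POS_integrand k q l ((r, r'), psi_kq k q)
     = (\<Sum>w\<in>words l q. \<Prod>i\<in>{1..k}. word_prob l w (r i))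
       + real (k - 1) * (\<Sum>w\<in>words l q. \<Prod>i\<in>{1..k}. word_prob l w (r' i))
       - real k * (\<Sum>w\<in>words l q. word_prob l w (r 1) * (\<Prod>i\<in>{2..k}. word_prob l w (r' i)))"
proof -
  define r\<^sub>1 where "r\<^sub>1 = (\<lambda>i. if i = 1 then r i else r' i)"
  have split: "{1..k} = insert 1 {2..k}" "1 \<notin> {2..k::nat}"
    using assms(1) by auto
  have tail: "(\<Prod>i\<in>{2..k}. F i (r\<^sub>1 i)) = (\<Prod>i\<in>{2..k}. F i (r' i))" for F :: "nat \<Rightarrow> (nat \<Rightarrow> real) \<Rightarrow> real"
    by (intro prod.cong) (auto simp: r\<^sub>1_def)
  have r\<^sub>1_tuple: "r 1 (\<tau> 1) * (\<Prod>i\<in>{2..k}. r' i (\<tau> i)) = (\<Prod>i\<in>{1..k}. r\<^sub>1 i (\<tau> i))" for \<tau>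
    unfolding split(1) prod.insert[OF finite_atLeastAtMost split(2)]
      tail[of "\<lambda>i \<rho>. \<rho> (\<tau> i)"] by (simp add: r\<^sub>1_def)
  have r\<^sub>1_distrs: "\<forall>i\<in>{1..k}. r\<^sub>1 i \<in> distrs q"
    using assms(2,3) by (simp add: r\<^sub>1_def)
  have r\<^sub>1_word: "(\<Prod>i\<in>{1..k}. word_prob l w (r\<^sub>1 i))
      = word_prob l w (r 1) * (\<Prod>i\<in>{2..k}. word_prob l w (r' i))" for w
    unfolding split(1) prod.insert[OF finite_atLeastAtMost split(2)]
      tail[of "\<lambda>_ \<rho>. word_prob l w \<rho>"] by (simp add: r\<^sub>1_def)
  show ?thesis
    unfolding POS_integrand_def prod.case r\<^sub>1_tuple one_minus_sum_psi_kq[OF assms(1,2)] one_minus_sum_psi_kq[OF assms(1,3)]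
      one_minus_sum_psi_kq[OF assms(1) r\<^sub>1_distrs] power_sum_prod_eq_sum_words r\<^sub>1_word
    by (rule refl)
qed

lemma integral_sum_words:
  fixes k :: nat
  assumes "\<pi> \<in> centred_measures q" "\<pi>' \<in> centred_measures q" "J \<subseteq> {1..k}" "J' \<subseteq> {1..k}"
  defines "M \<equiv> PiM {1..k} (\<lambda>_. \<pi>) \<Otimes>\<^sub>M PiM {1..k} (\<lambda>_. \<pi>')"
  shows "integrable M (\<lambda>z. \<Sum>w\<in>words l q. (\<Prod>i\<in>J. word_prob l w (fst z i)) * (\<Prod>i\<in>J'. word_prob l w (snd z i)))"
    and "(\<integral>z. (\<Sum>w\<in>words l q. (\<Prod>i\<in>J. word_prob l w (fst z i)) * (\<Prod>i\<in>J'. word_prob l w (snd z i))) \<partial>M)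
       = (\<Sum>w\<in>words l q. (\<integral>\<rho>. word_prob l w \<rho> \<partial>\<pi>) ^ card J * (\<integral>\<rho>. word_prob l w \<rho> \<partial>\<pi>') ^ card J')"
proof -
  have PiM: "integrable (PiM {1..k} (\<lambda>_. \<mu>)) (\<lambda>r. \<Prod>i\<in>K. word_prob l w (r i))"
    "(\<integral>r. (\<Prod>i\<in>K. word_prob l w (r i)) \<partial>PiM {1..k} (\<lambda>_. \<mu>)) = (\<integral>\<rho>. word_prob l w \<rho> \<partial>\<mu>) ^ card K"
    if "\<mu> \<in> centred_measures q" "K \<subseteq> {1..k}" for \<mu> K w
    using integral_PiM_prod_subset[OF prob_space_centred_measures[OF that(1)] _ that(2)
        integrable_word_prob[OF that(1), where w = w]] by simp_all
  have bound: "\<bar>\<Prod>i\<in>K. word_prob l w (r i)\<bar> \<le> 1"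
    if "\<mu> \<in> centred_measures q" "K \<subseteq> {1..k}" "r \<in> space (PiM {1..k} (\<lambda>_. \<mu>))" for \<mu> K w r
  proof -
    have "\<forall>i\<in>K. r i \<in> distrs q"
      using that by (auto simp: space_PiM space_centred_measures)
    then show ?thesis
      using word_prob_bounds by (auto simp: abs_prod intro!: prod_le_1)
  qed
  have prob_spaces: "prob_space (PiM {1..k} (\<lambda>_. \<pi>))" "prob_space (PiM {1..k} (\<lambda>_. \<pi>'))"
    using assms(1,2) by (auto intro!: prob_space_PiM prob_space_centred_measures)
  note product_term = integral_pair_measure_mult[OF prob_spaces
      borel_measurable_integrable[OF PiM(1)[OF assms(1,3)]] bound[OF assms(1,3)]
      borel_measurable_integrable[OF PiM(1)[OF assms(2,4)]] bound[OF assms(2,4)], folded M_def,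
      unfolded PiM(2)[OF assms(1,3)] PiM(2)[OF assms(2,4)]]
  show "integrable M (\<lambda>z. \<Sum>w\<in>words l q. (\<Prod>i\<in>J. word_prob l w (fst z i)) * (\<Prod>i\<in>J'. word_prob l w (snd z i)))"
    using product_term(1) by (rule Bochner_Integration.integrable_sum)
  show "(\<integral>z. (\<Sum>w\<in>words l q. (\<Prod>i\<in>J. word_prob l w (fst z i)) * (\<Prod>i\<in>J'. word_prob l w (snd z i))) \<partial>M)
       = (\<Sum>w\<in>words l q. (\<integral>\<rho>. word_prob l w \<rho> \<partial>\<pi>) ^ card J * (\<integral>\<rho>. word_prob l w \<rho> \<partial>\<pi>') ^ card J')"
    using product_term by (simp add: Bochner_Integration.integral_sum)
qed

lemma integral_POS_integrand_psi_kq: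
  assumes "k \<ge> 1" "\<pi> \<in> centred_measures q" "\<pi>' \<in> centred_measures q"
  defines "M \<equiv> (PiM {1..k} (\<lambda>_. \<pi>) \<Otimes>\<^sub>M PiM {1..k} (\<lambda>_. \<pi>')) \<Otimes>\<^sub>M measure_pmf (return_pmf (psi_kq k q))"
  shows "integrable M (POS_integrand k q l)"
    and "(\<integral>x. POS_integrand k q l x \<partial>M) = (\<Sum>w\<in>words l q.
      (\<integral>\<rho>. word_prob l w \<rho> \<partial>\<pi>) ^ k + real (k - 1) * (\<integral>\<rho>. word_prob l w \<rho> \<partial>\<pi>') ^ k
      - real k * ((\<integral>\<rho>. word_prob l w \<rho> \<partial>\<pi>) * (\<integral>\<rho>. word_prob l w \<rho> \<partial>\<pi>') ^ (k - 1)))"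
proof -
  let ?M = "PiM {1..k} (\<lambda>_. \<pi>) \<Otimes>\<^sub>M PiM {1..k} (\<lambda>_. \<pi>')"
  let ?W = "\<lambda>J J' z. \<Sum>w\<in>words l q. (\<Prod>i\<in>J. word_prob l w (fst z i)) * (\<Prod>i\<in>J'. word_prob l w (snd z i))"
  define g where "g = (\<lambda>z. ?W {1..k} {} z + real (k - 1) * ?W {} {1..k} z - real k * ?W {1} {2..k} z)"
  have "{} \<subseteq> {1..k}" "{1} \<subseteq> {1..k}" "{2..k} \<subseteq> {1..k}"
    using assms(1) by auto
  note W = integral_sum_words[OF assms(2,3) order_refl \<open>{} \<subseteq> {1..k}\<close>]
    integral_sum_words[OF assms(2,3) \<open>{} \<subseteq> {1..k}\<close> order_refl]
    integral_sum_words[OF assms(2,3) \<open>{1} \<subseteq> {1..k}\<close> \<open>{2..k} \<subseteq> {1..k}\<close>]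
  have integrand_eq: "POS_integrand k q l (z, psi_kq k q) = g z" if "z \<in> space ?M" for z
  proof -
    have "\<forall>i\<in>{1..k}. fst z i \<in> distrs q" "\<forall>i\<in>{1..k}. snd z i \<in> distrs q"
      using that by (auto simp: space_pair_measure space_PiM space_centred_measures[OF assms(2)]
          space_centred_measures[OF assms(3)])
    then show ?thesis
      using POS_integrand_psi_kq[OF assms(1), of "fst z" q "snd z" l] by (simp add: g_def)
  qed
  have "prob_space ?M"
    using assms(2,3) by (intro prob_space_pair prob_space_PiM prob_space_centred_measures)
  have "integrable ?M g"
    unfolding g_def using W by (intro Bochner_Integration.integrable_diff Bochner_Integration.integrable_add
        Bochner_Integration.integrable_mult_right) simp_all
  moreover have "integrable ?M (\<lambda>z. POS_integrand k q l (z, psi_kq k q)) \<longleftrightarrow> integrable ?M g"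
    using integrand_eq by (intro Bochner_Integration.integrable_cong) simp_all
  ultimately have "integrable ?M (\<lambda>z. POS_integrand k q l (z, psi_kq k q))"
    by simp
  note pair_return = integral_pair_measure_return_pmf[OF \<open>prob_space ?M\<close>
      measurable_POS_integrand[OF assms(1-3)] this, folded M_def]
  show "integrable M (POS_integrand k q l)"
    by (rule pair_return(1))
  have "(\<integral>x. POS_integrand k q l x \<partial>M) = (\<integral>z. g z \<partial>?M)"
    unfolding pair_return(2) using integrand_eq by (intro Bochner_Integration.integral_cong) simp_all
  also have "\<dots> = (\<integral>z. ?W {1..k} {} z \<partial>?M) + real (k - 1) * (\<integral>z. ?W {} {1..k} z \<partial>?M)
      - real k * (\<integral>z. ?W {1} {2..k} z \<partial>?M)"
    unfolding g_def using W(1,3,5) by simp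
  finally show "(\<integral>x. POS_integrand k q l x \<partial>M) = (\<Sum>w\<in>words l q.
      (\<integral>\<rho>. word_prob l w \<rho> \<partial>\<pi>) ^ k + real (k - 1) * (\<integral>\<rho>. word_prob l w \<rho> \<partial>\<pi>') ^ k
      - real k * ((\<integral>\<rho>. word_prob l w \<rho> \<partial>\<pi>) * (\<integral>\<rho>. word_prob l w \<rho> \<partial>\<pi>') ^ (k - 1)))"
    unfolding W(2,4,6) using assms(1) by (simp add: sum.distrib sum_subtractf sum_distrib_left)
qed

lemma prop_POS_psi_kq:
  assumes "k \<ge> 1"
  shows "prop_POS k q (return_pmf (psi_kq k q))"
  unfolding prop_POS_def Let_def POS_integrand_def[symmetric]
proof (intro ballI allI impI conjI)
  fix \<pi> \<pi>' and l :: nat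
  assume \<pi>: "\<pi> \<in> centred_measures q" and \<pi>': "\<pi>' \<in> centred_measures q"
  note integral = integral_POS_integrand_psi_kq[OF assms \<pi> \<pi>', of l]
  show "integrable ((PiM {1..k} (\<lambda>_. \<pi>) \<Otimes>\<^sub>M PiM {1..k} (\<lambda>_. \<pi>')) \<Otimes>\<^sub>M measure_pmf (return_pmf (psi_kq k q)))
      (POS_integrand k q l)"
    by (rule integral(1))
  have nonneg: "(\<integral>\<rho>. word_prob l w \<rho> \<partial>\<mu>) \<ge> 0" if "\<mu> \<in> centred_measures q" for \<mu> w
    using word_prob_bounds that by (auto intro!: integral_nonneg_AE AE_I2 simp: space_centred_measures)
  show "0 \<le> (\<integral>x. POS_integrand k q l x
      \<partial>(PiM {1..k} (\<lambda>_. \<pi>) \<Otimes>\<^sub>M PiM {1..k} (\<lambda>_. \<pi>')) \<Otimes>\<^sub>M measure_pmf (return_pmf (psi_kq k q)))"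
    unfolding integral(2)
  proof (rule sum_nonneg)
    fix w
    show "0 \<le> (\<integral>\<rho>. word_prob l w \<rho> \<partial>\<pi>) ^ k + real (k - 1) * (\<integral>\<rho>. word_prob l w \<rho> \<partial>\<pi>') ^ k
        - real k * ((\<integral>\<rho>. word_prob l w \<rho> \<partial>\<pi>) * (\<integral>\<rho>. word_prob l w \<rho> \<partial>\<pi>') ^ (k - 1))"
      using Young_inequality_power[OF nonneg[OF \<pi>] nonneg[OF \<pi>'] assms] by simp
  qed
qed

theorem mainTheorem14:
  fixes k q :: nat
  assumes "k \<ge> 2" and "q \<ge> 2" and "k + q > 4"
  shows "prop_SYM k q {psi_kq k q} (return_pmf (psi_kq k q))
       \<and> prop_BAL k q (return_pmf (psi_kq k q))
       \<and> prop_MIN k q (return_pmf (psi_kq k q))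
       \<and> prop_POS k q (return_pmf (psi_kq k q))
       \<and> prop_UNI k q {psi_kq k q}"
proof -
  have "k \<ge> 1" "q \<ge> 1"
    using assms by simp_all
  then show ?thesis
    using prop_SYM_psi_kq prop_BAL_psi_kq prop_MIN_psi_kq[OF assms(1)] prop_POS_psi_kq
      prop_UNI_psi_kq[OF assms] by blast
qed

end
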